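(* Let $A$ be a skew brace. If every ideal of $A$ has finite weight, then $\mathrm{Spec}\,A$ with the spectral topology is a Noetherian topological space (its closed subsets satisfy the descending chain condition).
   Context: A (left) skew brace is a triple $(A,+,\circ)$ where $(A,+)$ and $(A,\circ)$ are groups such that $a\circ(b+c)=a\circ b-a+a\circ c$ for all $a,b,c$; common identity $e$. Put $\lambda_a(b)=-a+a\circ b$, $a*b=-a+a\circ b-b$. An ideal is a normal subgroup $I$ of both $(A,+)$ and $(A,\circ)$ with $\lambda_a(I)\subseteq I$ for all $a$. The weight of an ideal (as a skew brace) is the minimal number of elements needed to generate it as an ideal; an ideal has finite weight if it is generated as an ideal by finitely many elements (equivalently, all ideals have finite weight iff every ascending chain of ideals of $A$ stabilizes). For subsets $I,J$, $I*J=\{i*j\mid i\in I,j\in J\}$. A prime ideal is a proper ideal $P$ such that for any subsets $I,J$ of $A$, $I*J\subseteq P$ implies $I\subseteq P$ or $J\subseteq P$; $\mathrm{Spec}\,A$ is the set of prime ideals. The spectral topology on $\mathrm{Spec}\,A$ has closed sets $H(I)=\{P\in\mathrm{Spec}\,A\mid I\subseteq P\}$, $I$ an ideal. *)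

theory Defs
  imports "HOL-Algebra.Group" "HOL-Algebra.Coset" "HOL-Analysis.Abstract_Topology"
begin

text \<open>A (left) skew brace on the common carrier of two groups: the additive
group G (library operation otimes of G plays the role of +, inv of G is minus)
and the multiplicative group C (otimes of C plays the role of circ).\<close>

definition skew_brace :: "('a,'b) monoid_scheme \<Rightarrow> ('a,'c) monoid_scheme \<Rightarrow> bool" where
  "skew_brace G C \<longleftrightarrow> group G \<and> group C \<and> carrier G = carrier C \<and> \<one>\<^bsub>G\<^esub> = \<one>\<^bsub>C\<^esub> \<and>
     (\<forall>a\<in>carrier G. \<forall>b\<in>carrier G. \<forall>c\<in>carrier G.
        a \<otimes>\<^bsub>C\<^esub> (b \<otimes>\<^bsub>G\<^esub> c) = ((a \<otimes>\<^bsub>C\<^esub> b) \<otimes>\<^bsub>G\<^esub> inv\<^bsub>G\<^esub> a) \<otimes>\<^bsub>G\<^esub> (a \<otimes>\<^bsub>C\<^esub> c))"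

definition brace_lambda :: "('a,'b) monoid_scheme \<Rightarrow> ('a,'c) monoid_scheme \<Rightarrow> 'a \<Rightarrow> 'a \<Rightarrow> 'a" where
  "brace_lambda G C a b = inv\<^bsub>G\<^esub> a \<otimes>\<^bsub>G\<^esub> (a \<otimes>\<^bsub>C\<^esub> b)"

definition brace_star :: "('a,'b) monoid_scheme \<Rightarrow> ('a,'c) monoid_scheme \<Rightarrow> 'a \<Rightarrow> 'a \<Rightarrow> 'a" where
  "brace_star G C a b = (inv\<^bsub>G\<^esub> a \<otimes>\<^bsub>G\<^esub> (a \<otimes>\<^bsub>C\<^esub> b)) \<otimes>\<^bsub>G\<^esub> inv\<^bsub>G\<^esub> b"

definition brace_star_set :: "('a,'b) monoid_scheme \<Rightarrow> ('a,'c) monoid_scheme \<Rightarrow> 'a set \<Rightarrow> 'a set \<Rightarrow> 'a set" where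
  "brace_star_set G C I J = {brace_star G C i j | i j. i \<in> I \<and> j \<in> J}"

definition brace_ideal :: "('a,'b) monoid_scheme \<Rightarrow> ('a,'c) monoid_scheme \<Rightarrow> 'a set \<Rightarrow> bool" where
  "brace_ideal G C I \<longleftrightarrow> normal I G \<and> normal I C \<and>
     (\<forall>a\<in>carrier G. brace_lambda G C a ` I \<subseteq> I)"

definition brace_ideal_gen :: "('a,'b) monoid_scheme \<Rightarrow> ('a,'c) monoid_scheme \<Rightarrow> 'a set \<Rightarrow> 'a set" where
  "brace_ideal_gen G C S = \<Inter> {I. brace_ideal G C I \<and> S \<subseteq> I}"

definition finite_weight :: "('a,'b) monoid_scheme \<Rightarrow> ('a,'c) monoid_scheme \<Rightarrow> 'a set \<Rightarrow> bool" where
  "finite_weight G C I \<longleftrightarrow> (\<exists>S. finite S \<and> S \<subseteq> I \<and> brace_ideal_gen G C S = I)"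

definition prime_ideal :: "('a,'b) monoid_scheme \<Rightarrow> ('a,'c) monoid_scheme \<Rightarrow> 'a set \<Rightarrow> bool" where
  "prime_ideal G C P \<longleftrightarrow> brace_ideal G C P \<and> P \<noteq> carrier G \<and>
     (\<forall>I J. I \<subseteq> carrier G \<longrightarrow> J \<subseteq> carrier G \<longrightarrow>
        brace_star_set G C I J \<subseteq> P \<longrightarrow> I \<subseteq> P \<or> J \<subseteq> P)"

definition Spec :: "('a,'b) monoid_scheme \<Rightarrow> ('a,'c) monoid_scheme \<Rightarrow> 'a set set" where
  "Spec G C = {P. prime_ideal G C P}"

definition hull_H :: "('a,'b) monoid_scheme \<Rightarrow> ('a,'c) monoid_scheme \<Rightarrow> 'a set \<Rightarrow> 'a set set" where
  "hull_H G C I = {P \<in> Spec G C. I \<subseteq> P}"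

definition spectral_topology :: "('a,'b) monoid_scheme \<Rightarrow> ('a,'c) monoid_scheme \<Rightarrow> 'a set topology" where
  "spectral_topology G C = topology (\<lambda>U. U \<subseteq> Spec G C \<and>
      (\<exists>I. brace_ideal G C I \<and> Spec G C - U = hull_H G C I))"

definition noetherian_space :: "'a topology \<Rightarrow> bool" where
  "noetherian_space T \<longleftrightarrow> (\<forall>F :: nat \<Rightarrow> 'a set. (\<forall>n. closedin T (F n)) \<and> (\<forall>n. F (Suc n) \<subseteq> F n)
      \<longrightarrow> (\<exists>N. \<forall>n\<ge>N. F n = F N))"

end

theory Submission
  imports Defs "HOL-Algebra.Generated_Groups"
begin

text \<open>A closed subset F of Spec A is recovered from the ideal I(F), the intersection of
the primes in F, as F = H(I(F)). A descending chain of closed sets therefore yields an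
ascending chain of ideals I(F n). Its union is an ideal, of finite weight by hypothesis,
so its finitely many generators already lie in some I(F N); from there on the chain of
ideals, and with it the chain of closed sets, is constant. The brace structure enters
only in showing that the sets H(I) are the closed sets of a topology: for ideals I and J
one has I * J \<subseteq> I \<inter> J, so H(I \<inter> J) = H(I) \<union> H(J) by primality.\<close>

lemma (in group) normal_Inter:
  assumes "A \<noteq> {}" and normal: "\<And>H. H \<in> A \<Longrightarrow> H \<lhd> G"
  shows "\<Inter>A \<lhd> G"
proof (rule normal_invI)
  show "subgroup (\<Inter>A) G"
    using assms by (intro subgroups_Inter) (auto intro: normal_imp_subgroup)
  show "x \<otimes> h \<otimes> inv x \<in> \<Inter>A" if "x \<in> carrier G" "h \<in> \<Inter>A" for x h
    using that normal.inv_op_closed2[OF normal] by blast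
qed

lemma (in group) normal_Union_chain:
  assumes "\<C> \<noteq> {}" and "chain\<^sub>\<subseteq> \<C>" and normal: "\<And>H. H \<in> \<C> \<Longrightarrow> H \<lhd> G"
  shows "\<Union>\<C> \<lhd> G"
proof (rule normal_invI)
  have sub: "\<And>H. H \<in> \<C> \<Longrightarrow> subgroup H G"
    using normal normal_imp_subgroup by blast
  show "subgroup (\<Union>\<C>) G"
  proof (rule subgroup.intro)
    show "\<Union>\<C> \<subseteq> carrier G"
      using sub subgroup.subset by blast
    show "x \<otimes> y \<in> \<Union>\<C>" if xy: "x \<in> \<Union>\<C>" "y \<in> \<Union>\<C>" for x y
    proof -
      obtain H where "H \<in> \<C>" "{x, y} \<subseteq> H"
        by (rule finite_subset_Union_chain[of "{x, y}" \<C> UNIV])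
          (use xy assms(1,2) in \<open>auto simp: chain_subset_alt_def\<close>)
      then have "x \<otimes> y \<in> H"
        using subgroup.m_closed[OF sub] by blast
      with \<open>H \<in> \<C>\<close> show ?thesis by blast
    qed
    show "\<one> \<in> \<Union>\<C>"
      using assms(1) sub subgroup.one_closed by blast
    show "inv x \<in> \<Union>\<C>" if x: "x \<in> \<Union>\<C>" for x
    proof -
      obtain H where "H \<in> \<C>" "x \<in> H"
        using x by blast
      then show ?thesis
        using subgroup.m_inv_closed[OF sub] by blast
    qed
  qed
  show "x \<otimes> h \<otimes> inv x \<in> \<Union>\<C>" if x: "x \<in> carrier G" and h: "h \<in> \<Union>\<C>" for x h
  proof -
    obtain H where "H \<in> \<C>" "h \<in> H"
      using h by blast
    then show ?thesis
      using normal.inv_op_closed2[OF normal x] by blast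
  qed
qed

lemma skew_braceD:
  assumes "skew_brace G C"
  shows "group G" and "group C" and "carrier C = carrier G"
  using assms unfolding skew_brace_def by auto

lemma brace_ideal_subset: "brace_ideal G C I \<Longrightarrow> I \<subseteq> carrier G"
  unfolding brace_ideal_def by (meson normal_imp_subgroup subgroup.subset)

lemma brace_ideal_carrier:
  assumes "skew_brace G C"
  shows "brace_ideal G C (carrier G)"
proof -
  interpret G: group G using skew_braceD(1)[OF assms] .
  interpret C: group C using skew_braceD(2)[OF assms] .
  have "carrier C = carrier G"
    using skew_braceD(3)[OF assms] .
  then show ?thesis
    unfolding brace_ideal_def brace_lambda_def
    using G.normal_self C.normal_self by (metis G.inv_closed G.m_closed C.m_closed image_subsetI)
qed

lemma brace_ideal_Inter:
  assumes "skew_brace G C" and "A \<noteq> {}" and ideal: "\<And>I. I \<in> A \<Longrightarrow> brace_ideal G C I"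
  shows "brace_ideal G C (\<Inter>A)"
  unfolding brace_ideal_def
proof (intro conjI ballI)
  show "\<Inter>A \<lhd> G" "\<Inter>A \<lhd> C"
    using group.normal_Inter[OF skew_braceD(1)[OF assms(1)] assms(2)]
      group.normal_Inter[OF skew_braceD(2)[OF assms(1)] assms(2)] ideal
    unfolding brace_ideal_def by blast+
  show "brace_lambda G C a ` \<Inter>A \<subseteq> \<Inter>A" if "a \<in> carrier G" for a
    using that ideal unfolding brace_ideal_def by blast
qed

lemma brace_ideal_Union_chain:
  assumes "skew_brace G C" and "\<C> \<noteq> {}" and "chain\<^sub>\<subseteq> \<C>"
    and ideal: "\<And>I. I \<in> \<C> \<Longrightarrow> brace_ideal G C I"
  shows "brace_ideal G C (\<Union>\<C>)"
  unfolding brace_ideal_def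
proof (intro conjI ballI)
  show "\<Union>\<C> \<lhd> G" "\<Union>\<C> \<lhd> C"
    using group.normal_Union_chain[OF skew_braceD(1)[OF assms(1)] assms(2,3)]
      group.normal_Union_chain[OF skew_braceD(2)[OF assms(1)] assms(2,3)] ideal
    unfolding brace_ideal_def by blast+
  show "brace_lambda G C a ` \<Union>\<C> \<subseteq> \<Union>\<C>" if "a \<in> carrier G" for a
    using that ideal unfolding brace_ideal_def by blast
qed

lemma brace_ideal_brace_ideal_gen:
  assumes "skew_brace G C" and "S \<subseteq> carrier G"
  shows "brace_ideal G C (brace_ideal_gen G C S)"
  unfolding brace_ideal_gen_def
  using assms brace_ideal_carrier by (intro brace_ideal_Inter) auto

lemma brace_ideal_gen_subset_iff:
  "brace_ideal G C I \<Longrightarrow> brace_ideal_gen G C S \<subseteq> I \<longleftrightarrow> S \<subseteq> I"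
  unfolding brace_ideal_gen_def by blast

lemma brace_star_mem_right:
  assumes "brace_ideal G C J" and "a \<in> carrier G" and "j \<in> J"
  shows "brace_star G C a j \<in> J"
proof -
  have J: "subgroup J G" and "brace_lambda G C a j \<in> J"
    using assms unfolding brace_ideal_def by (auto intro: normal_imp_subgroup)
  then show ?thesis
    unfolding brace_star_def brace_lambda_def
    using subgroup.m_closed[OF J] subgroup.m_inv_closed[OF J assms(3)] by blast
qed

lemma brace_star_mem_left:
  assumes "skew_brace G C" and I: "brace_ideal G C I" and "i \<in> I" and b: "b \<in> carrier G"
  shows "brace_star G C i b \<in> I"
proof -
  interpret G: group G using skew_braceD(1)[OF assms(1)] .
  interpret C: group C using skew_braceD(2)[OF assms(1)] .
  have carrier: "carrier C = carrier G"
    using skew_braceD(3)[OF assms(1)] .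
  have "I \<lhd> G" and "I \<lhd> C" and lambda: "brace_lambda G C b ` I \<subseteq> I"
    using I b unfolding brace_ideal_def by auto
  have i: "i \<in> carrier G"
    using brace_ideal_subset[OF I] assms(3) by blast
  \<comment> \<open>i \<circ> b = b \<circ> k = b + \<lambda>(b, k) for k = b\<inverse> \<circ> i \<circ> b \<in> I, so
      i * b = -i + (b + \<lambda>(b, k) - b) lies in the additive normal subgroup I.\<close>
  define k where "k = inv\<^bsub>C\<^esub> b \<otimes>\<^bsub>C\<^esub> i \<otimes>\<^bsub>C\<^esub> b"
  have "k \<in> I"
    unfolding k_def using normal.inv_op_closed1[OF \<open>I \<lhd> C\<close>] assms(3) b carrier by simp
  have iC: "i \<in> carrier C" and bC: "b \<in> carrier C"
    using i b carrier by auto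
  have bk: "b \<otimes>\<^bsub>C\<^esub> k = i \<otimes>\<^bsub>C\<^esub> b"
    unfolding k_def using iC bC by (simp add: C.m_assoc[symmetric])
  define l where "l = brace_lambda G C b k"
  have l: "l \<in> I"
    using lambda \<open>k \<in> I\<close> unfolding l_def by blast
  have "b \<otimes>\<^bsub>G\<^esub> l = i \<otimes>\<^bsub>C\<^esub> b"
  proof -
    have "i \<otimes>\<^bsub>C\<^esub> b \<in> carrier G"
      using iC bC carrier by auto
    then show ?thesis
      unfolding l_def brace_lambda_def bk using b by (simp add: G.m_assoc[symmetric])
  qed
  moreover have "l \<in> carrier G"
    using brace_ideal_subset[OF I] l by blast
  ultimately have "brace_star G C i b = inv\<^bsub>G\<^esub> i \<otimes>\<^bsub>G\<^esub> (b \<otimes>\<^bsub>G\<^esub> l \<otimes>\<^bsub>G\<^esub> inv\<^bsub>G\<^esub> b)"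
    unfolding brace_star_def using i b by (metis G.inv_closed G.m_assoc G.m_closed)
  also have "\<dots> \<in> I"
    using normal_imp_subgroup[OF \<open>I \<lhd> G\<close>] normal.inv_op_closed2[OF \<open>I \<lhd> G\<close> b l] assms(3)
    by (meson subgroup.m_closed subgroup.m_inv_closed)
  finally show ?thesis .
qed

lemma hull_H_brace_ideal_gen: "hull_H G C (brace_ideal_gen G C S) = hull_H G C S"
proof -
  have "brace_ideal_gen G C S \<subseteq> P \<longleftrightarrow> S \<subseteq> P" if "P \<in> Spec G C" for P
    using that by (simp add: brace_ideal_gen_subset_iff Spec_def prime_ideal_def)
  then show ?thesis
    unfolding hull_H_def by auto
qed

lemma hull_H_carrier: "hull_H G C (carrier G) = {}"
  unfolding hull_H_def Spec_def prime_ideal_def by (auto dest: brace_ideal_subset)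

lemma hull_H_Int:
  assumes "skew_brace G C" and I: "brace_ideal G C I" and J: "brace_ideal G C J"
  shows "hull_H G C (I \<inter> J) = hull_H G C I \<union> hull_H G C J"
proof
  show "hull_H G C I \<union> hull_H G C J \<subseteq> hull_H G C (I \<inter> J)"
    unfolding hull_H_def by blast
  show "hull_H G C (I \<inter> J) \<subseteq> hull_H G C I \<union> hull_H G C J"
  proof
    fix P
    assume "P \<in> hull_H G C (I \<inter> J)"
    then have "prime_ideal G C P" and "P \<in> Spec G C" and "I \<inter> J \<subseteq> P"
      unfolding hull_H_def Spec_def by auto
    moreover have "brace_star_set G C I J \<subseteq> I \<inter> J"
      unfolding brace_star_set_def
      using brace_star_mem_left[OF assms(1) I] brace_star_mem_right[OF J]
        brace_ideal_subset[OF I] brace_ideal_subset[OF J] by blast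
    ultimately have "I \<subseteq> P \<or> J \<subseteq> P"
      using brace_ideal_subset[OF I] brace_ideal_subset[OF J]
      unfolding prime_ideal_def by blast
    with \<open>P \<in> Spec G C\<close> show "P \<in> hull_H G C I \<union> hull_H G C J"
      unfolding hull_H_def by blast
  qed
qed

lemma istopology_spectral:
  assumes "skew_brace G C"
  shows "istopology (\<lambda>U. U \<subseteq> Spec G C \<and>
           (\<exists>I. brace_ideal G C I \<and> Spec G C - U = hull_H G C I))"
  unfolding istopology_def
proof (rule conjI; intro allI impI)
  fix U V
  assume "U \<subseteq> Spec G C \<and> (\<exists>I. brace_ideal G C I \<and> Spec G C - U = hull_H G C I)"
    and "V \<subseteq> Spec G C \<and> (\<exists>J. brace_ideal G C J \<and> Spec G C - V = hull_H G C J)"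
  then obtain I J where "U \<subseteq> Spec G C" and I: "brace_ideal G C I" "Spec G C - U = hull_H G C I"
    and J: "brace_ideal G C J" "Spec G C - V = hull_H G C J"
    by blast
  have "brace_ideal G C (I \<inter> J)"
    using brace_ideal_Inter[OF assms, of "{I, J}"] I J by auto
  moreover have "Spec G C - U \<inter> V = hull_H G C (I \<inter> J)"
    using hull_H_Int[OF assms I(1) J(1)] I(2) J(2) by blast
  ultimately show "U \<inter> V \<subseteq> Spec G C \<and>
      (\<exists>I. brace_ideal G C I \<and> Spec G C - U \<inter> V = hull_H G C I)"
    using \<open>U \<subseteq> Spec G C\<close> by blast
next
  fix K
  assume K: "\<forall>U\<in>K. U \<subseteq> Spec G C \<and> (\<exists>I. brace_ideal G C I \<and> Spec G C - U = hull_H G C I)"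
  then obtain f where f: "\<And>U. U \<in> K \<Longrightarrow> brace_ideal G C (f U) \<and> Spec G C - U = hull_H G C (f U)"
    by metis
  define S where "S = \<Union>(f ` K)"
  have "S \<subseteq> carrier G"
    unfolding S_def using f brace_ideal_subset by blast
  have "Spec G C - \<Union>K = hull_H G C S"
  proof (rule Set.set_eqI)
    fix P
    have "P \<notin> U \<longleftrightarrow> f U \<subseteq> P" if "U \<in> K" and "P \<in> Spec G C" for U
      using f[OF that(1)] that(2) unfolding hull_H_def by blast
    then show "P \<in> Spec G C - \<Union>K \<longleftrightarrow> P \<in> hull_H G C S"
      unfolding hull_H_def S_def by blast
  qed
  then have "Spec G C - \<Union>K = hull_H G C (brace_ideal_gen G C S)"
    by (simp add: hull_H_brace_ideal_gen)
  moreover have "\<Union>K \<subseteq> Spec G C"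
    using K by blast
  ultimately show "\<Union>K \<subseteq> Spec G C \<and>
      (\<exists>I. brace_ideal G C I \<and> Spec G C - \<Union>K = hull_H G C I)"
    using brace_ideal_brace_ideal_gen[OF assms \<open>S \<subseteq> carrier G\<close>] by blast
qed

lemma openin_spectral_topology:
  assumes "skew_brace G C"
  shows "openin (spectral_topology G C) U \<longleftrightarrow>
    U \<subseteq> Spec G C \<and> (\<exists>I. brace_ideal G C I \<and> Spec G C - U = hull_H G C I)"
  using istopology_spectral[OF assms] unfolding spectral_topology_def by simp

lemma topspace_spectral_topology:
  assumes "skew_brace G C"
  shows "topspace (spectral_topology G C) = Spec G C"
proof
  show "topspace (spectral_topology G C) \<subseteq> Spec G C"
    using openin_topspace[of "spectral_topology G C"]
    unfolding openin_spectral_topology[OF assms] by (rule conjunct1)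
  have "Spec G C - Spec G C = hull_H G C (carrier G)"
    by (simp add: hull_H_carrier)
  then have "openin (spectral_topology G C) (Spec G C)"
    using brace_ideal_carrier[OF assms] unfolding openin_spectral_topology[OF assms] by blast
  then show "Spec G C \<subseteq> topspace (spectral_topology G C)"
    by (rule openin_subset)
qed

lemma closedin_spectral_topology:
  assumes "skew_brace G C"
  shows "closedin (spectral_topology G C) F \<longleftrightarrow> (\<exists>I. brace_ideal G C I \<and> F = hull_H G C I)"
proof
  assume "closedin (spectral_topology G C) F"
  then have "F \<subseteq> Spec G C" and "openin (spectral_topology G C) (Spec G C - F)"
    unfolding closedin_def topspace_spectral_topology[OF assms] by auto
  moreover have "Spec G C - (Spec G C - F) = F"
    using \<open>F \<subseteq> Spec G C\<close> by blast
  ultimately show "\<exists>I. brace_ideal G C I \<and> F = hull_H G C I"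
    unfolding openin_spectral_topology[OF assms] by metis
next
  assume "\<exists>I. brace_ideal G C I \<and> F = hull_H G C I"
  then obtain I where "brace_ideal G C I" and "F = hull_H G C I"
    by blast
  moreover have "F \<subseteq> Spec G C"
    using \<open>F = hull_H G C I\<close> unfolding hull_H_def by blast
  moreover have "Spec G C - (Spec G C - F) = F"
    using \<open>F \<subseteq> Spec G C\<close> by blast
  ultimately show "closedin (spectral_topology G C) F"
    unfolding closedin_def topspace_spectral_topology[OF assms] openin_spectral_topology[OF assms]
    by auto
qed

definition vanishing_ideal :: "('a, 'b) monoid_scheme \<Rightarrow> 'a set set \<Rightarrow> 'a set" where
  "vanishing_ideal G F = carrier G \<inter> \<Inter>F"

lemma brace_ideal_vanishing_ideal:
  assumes "skew_brace G C" and "F \<subseteq> Spec G C"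
  shows "brace_ideal G C (vanishing_ideal G F)"
proof -
  have "brace_ideal G C (\<Inter>(insert (carrier G) F))"
    using brace_ideal_carrier[OF assms(1)] assms(2)
    by (intro brace_ideal_Inter[OF assms(1)]) (auto simp: Spec_def prime_ideal_def)
  then show ?thesis
    by (simp add: vanishing_ideal_def)
qed

lemma hull_H_vanishing_ideal:
  assumes "skew_brace G C" and "closedin (spectral_topology G C) F"
  shows "hull_H G C (vanishing_ideal G F) = F"
proof -
  obtain I where I: "brace_ideal G C I" and F: "F = hull_H G C I"
    using assms closedin_spectral_topology by blast
  have "I \<subseteq> vanishing_ideal G F"
    unfolding vanishing_ideal_def F hull_H_def using brace_ideal_subset[OF I] by blast
  then have "hull_H G C (vanishing_ideal G F) \<subseteq> F"
    unfolding F hull_H_def by blast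
  moreover have "F \<subseteq> hull_H G C (vanishing_ideal G F)"
    unfolding F hull_H_def vanishing_ideal_def by blast
  ultimately show ?thesis
    by blast
qed

lemma brace_ideal_Union_chain_mem:
  assumes "skew_brace G C" and weight: "\<forall>I. brace_ideal G C I \<longrightarrow> finite_weight G C I"
    and "\<C> \<noteq> {}" and "chain\<^sub>\<subseteq> \<C>" and ideal: "\<And>I. I \<in> \<C> \<Longrightarrow> brace_ideal G C I"
  shows "\<Union>\<C> \<in> \<C>"
proof -
  have "brace_ideal G C (\<Union>\<C>)"
    using brace_ideal_Union_chain[OF assms(1,3,4) ideal] .
  with weight have "finite_weight G C (\<Union>\<C>)"
    by blast
  then obtain S where "finite S" and "S \<subseteq> \<Union>\<C>" and gen: "brace_ideal_gen G C S = \<Union>\<C>"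
    unfolding finite_weight_def by blast
  obtain B where "B \<in> \<C>" and "S \<subseteq> B"
    by (rule finite_subset_Union_chain[of S \<C> UNIV])
      (use \<open>finite S\<close> \<open>S \<subseteq> \<Union>\<C>\<close> assms(3,4) in \<open>auto simp: chain_subset_alt_def\<close>)
  then have "\<Union>\<C> \<subseteq> B"
    using brace_ideal_gen_subset_iff[OF ideal[OF \<open>B \<in> \<C>\<close>]] gen by blast
  with \<open>B \<in> \<C>\<close> show ?thesis
    by (metis Union_upper subset_antisym)
qed

lemma brace_ideal_ascending_chain_stabilizes:
  fixes J :: "nat \<Rightarrow> 'a set"
  assumes "skew_brace G C" and "\<forall>I. brace_ideal G C I \<longrightarrow> finite_weight G C I"
    and "mono J" and "\<And>n. brace_ideal G C (J n)"
  shows "\<exists>N. \<forall>n\<ge>N. J n = J N"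
proof -
  have "chain\<^sub>\<subseteq> (range J)"
    unfolding chain_subset_def
  proof (intro ballI)
    fix A B
    assume "A \<in> range J" and "B \<in> range J"
    then obtain m n where "A = J m" and "B = J n"
      by blast
    then show "A \<subseteq> B \<or> B \<subseteq> A"
      using monoD[OF \<open>mono J\<close>] nat_le_linear[of m n] by blast
  qed
  then have "\<Union>(range J) \<in> range J"
    using brace_ideal_Union_chain_mem[OF assms(1,2)] assms(4) by blast
  then obtain N where N: "\<Union>(range J) = J N"
    by blast
  have "J n = J N" if "n \<ge> N" for n
    using monoD[OF \<open>mono J\<close> that] N by blast
  then show ?thesis
    by blast
qed

theorem proposition4p20:
  fixes G :: "('a,'b) monoid_scheme" and C :: "('a,'c) monoid_scheme"
  assumes "skew_brace G C"
    and "\<forall>I. brace_ideal G C I \<longrightarrow> finite_weight G C I"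
  shows "noetherian_space (spectral_topology G C)"
  unfolding noetherian_space_def
proof (intro allI impI)
  fix F :: "nat \<Rightarrow> 'a set set"
  assume "(\<forall>n. closedin (spectral_topology G C) (F n)) \<and> (\<forall>n. F (Suc n) \<subseteq> F n)"
  then have closed: "\<And>n. closedin (spectral_topology G C) (F n)"
    and decreasing: "\<And>n. F (Suc n) \<subseteq> F n"
    by auto
  define J where "J n = vanishing_ideal G (F n)" for n
  have "mono J"
    unfolding mono_def J_def vanishing_ideal_def
    using lift_Suc_antimono_le[of F, OF decreasing] by blast
  moreover have "brace_ideal G C (J n)" for n
    unfolding J_def using closedin_subset[OF closed]
    by (simp add: brace_ideal_vanishing_ideal assms(1) topspace_spectral_topology)
  ultimately obtain N where "\<forall>n\<ge>N. J n = J N"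
    using brace_ideal_ascending_chain_stabilizes[OF assms] by blast
  then have "\<forall>n\<ge>N. F n = F N"
    using hull_H_vanishing_ideal[OF assms(1) closed] unfolding J_def by metis
  then show "\<exists>N. \<forall>n\<ge>N. F n = F N"
    by blast
qed

end
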